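(* Let $\mathcal{D}$ be a small category, $X:\mathcal{D}\to\mathbf{Set}_*$ a diagram of pointed sets, $A$ an abelian group and $\rho:(\lim_\mathcal{D}X)\wedge A\to\lim_\mathcal{D}(X\wedge A)$ the natural map. Then: (1) If $A$ is $m$-bounded ($mA=0$) then $\ker\rho$ and $\mathrm{coker}\,\rho$ are $m$-bounded. (2) If $A$ is uniquely divisible then $\ker\rho$ and $\mathrm{coker}\,\rho$ are uniquely divisible. (3) If $A$ is almost uniquely divisible then $\ker\rho$ and $\mathrm{coker}\,\rho$ are almost uniquely divisible (in particular cotorsion).
   Context: For a pointed set $Y$ (base point $*$) and abelian group $A$, $Y\wedge A:=\bigoplus_{Y\setminus\{*\}}A$; its elements are pointed maps $y:Y\to A$ with finite support. For $s\in Y$, $v\in A$, $sv$ denotes the element with value $v$ at $s$ and $0$ elsewhere ($*v=0$). A pointed map $f:Y\to Z$ induces $f_*:Y\wedge A\to Z\wedge A$, $f_*(sv)=f(s)v$. The natural map $\rho$ satisfies $\rho(xv)(d)=x(d)v$ for $x\in\lim_\mathcal{D}X$, $v\in A$, $d\in\mathcal{D}$. An abelian group is almost uniquely divisible if it is the direct sum of a uniquely divisible group and a bounded group. A group $C$ is cotorsion if $\mathrm{Ext}(\mathbb{Q},C)=0$. *)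

theory Defs
  imports Main "HOL-Library.Function_Algebras"
begin

text \<open>A small category: objects form the type 'd, morphisms the type 'm, with
  domain, codomain, identities and (partial) composition; composition is only
  constrained on composable pairs.\<close>

definition is_category ::
  "('m \<Rightarrow> 'd) \<Rightarrow> ('m \<Rightarrow> 'd) \<Rightarrow> ('d \<Rightarrow> 'm) \<Rightarrow> ('m \<Rightarrow> 'm \<Rightarrow> 'm) \<Rightarrow> bool" where
  "is_category dm cd idm cmp \<longleftrightarrow>
     (\<forall>d. dm (idm d) = d \<and> cd (idm d) = d) \<and>
     (\<forall>f g. cd f = dm g \<longrightarrow> dm (cmp g f) = dm f \<and> cd (cmp g f) = cd g) \<and>
     (\<forall>f. cmp f (idm (dm f)) = f \<and> cmp (idm (cd f)) f = f) \<and>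
     (\<forall>f g h. cd f = dm g \<and> cd g = dm h \<longrightarrow> cmp h (cmp g f) = cmp (cmp h g) f)"

text \<open>A functor X into pointed sets: object d goes to the pointed set (Xob d, pt d),
  morphism f goes to the pointed map Xmor f : Xob (dm f) \<rightarrow> Xob (cd f).\<close>

definition is_pointed_diagram ::
  "('m \<Rightarrow> 'd) \<Rightarrow> ('m \<Rightarrow> 'd) \<Rightarrow> ('d \<Rightarrow> 'm) \<Rightarrow> ('m \<Rightarrow> 'm \<Rightarrow> 'm) \<Rightarrow>
   ('d \<Rightarrow> 'x set) \<Rightarrow> ('d \<Rightarrow> 'x) \<Rightarrow> ('m \<Rightarrow> 'x \<Rightarrow> 'x) \<Rightarrow> bool" where
  "is_pointed_diagram dm cd idm cmp Xob pt Xmor \<longleftrightarrow>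
     (\<forall>d. pt d \<in> Xob d) \<and>
     (\<forall>f. \<forall>y\<in>Xob (dm f). Xmor f y \<in> Xob (cd f)) \<and>
     (\<forall>f. Xmor f (pt (dm f)) = pt (cd f)) \<and>
     (\<forall>d. \<forall>y\<in>Xob d. Xmor (idm d) y = y) \<and>
     (\<forall>f g. cd f = dm g \<longrightarrow> (\<forall>y\<in>Xob (dm f). Xmor (cmp g f) y = Xmor g (Xmor f y)))"

text \<open>The limit of X in pointed sets (base point: the family pt).\<close>

definition limX ::
  "('m \<Rightarrow> 'd) \<Rightarrow> ('m \<Rightarrow> 'd) \<Rightarrow> ('d \<Rightarrow> 'x set) \<Rightarrow> ('m \<Rightarrow> 'x \<Rightarrow> 'x) \<Rightarrow> ('d \<Rightarrow> 'x) set" where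
  "limX dm cd Xob Xmor = {x. (\<forall>d. x d \<in> Xob d) \<and> (\<forall>f. Xmor f (x (dm f)) = x (cd f))}"

text \<open>Y \<and> A for a pointed set (Y, p): finitely supported maps Y \<rightarrow> A vanishing at the
  base point (represented as maps on the ambient type, zero outside Y).\<close>

definition smash :: "'x set \<Rightarrow> 'x \<Rightarrow> ('x \<Rightarrow> 'a::zero) set" where
  "smash Y p = {y. finite {s. y s \<noteq> 0} \<and> (\<forall>s. (s \<notin> Y \<or> s = p) \<longrightarrow> y s = 0)}"

text \<open>f_* : Y \<and> A \<rightarrow> Z \<and> A for a pointed map f with target base point q:
  f_*(s v) = f(s) v, extended additively.\<close>

definition push :: "('x \<Rightarrow> 'y) \<Rightarrow> 'y \<Rightarrow> ('x \<Rightarrow> 'a::comm_monoid_add) \<Rightarrow> 'y \<Rightarrow> 'a" where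
  "push f q y t = (if t = q then 0 else sum y {s. y s \<noteq> 0 \<and> f s = t})"

definition limXA ::
  "('m \<Rightarrow> 'd) \<Rightarrow> ('m \<Rightarrow> 'd) \<Rightarrow> ('d \<Rightarrow> 'x set) \<Rightarrow> ('d \<Rightarrow> 'x) \<Rightarrow> ('m \<Rightarrow> 'x \<Rightarrow> 'x)
   \<Rightarrow> ('d \<Rightarrow> 'x \<Rightarrow> 'a::comm_monoid_add) set" where
  "limXA dm cd Xob pt Xmor =
     {z. (\<forall>d. z d \<in> smash (Xob d) (pt d)) \<and>
         (\<forall>f. push (Xmor f) (pt (cd f)) (z (dm f)) = z (cd f))}"

text \<open>The natural map \<rho> : (lim X) \<and> A \<rightarrow> lim (X \<and> A), \<rho>(x v)(d) = x(d) v, i.e.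
  componentwise the pushforward along the evaluation maps.\<close>

definition rho :: "('d \<Rightarrow> 'x) \<Rightarrow> (('d \<Rightarrow> 'x) \<Rightarrow> 'a::comm_monoid_add) \<Rightarrow> 'd \<Rightarrow> 'x \<Rightarrow> 'a" where
  "rho pt w = (\<lambda>d. push (\<lambda>x. x d) (pt d) w)"

primrec natmult :: "nat \<Rightarrow> 'a::monoid_add \<Rightarrow> 'a" where
  "natmult 0 a = 0"
| "natmult (Suc n) a = a + natmult n a"

definition is_subgroup :: "'a::ab_group_add set \<Rightarrow> bool" where
  "is_subgroup S \<longleftrightarrow> 0 \<in> S \<and> (\<forall>a\<in>S. \<forall>b\<in>S. a + b \<in> S) \<and> (\<forall>a\<in>S. - a \<in> S)"

text \<open>The quotient group S/T (T \<subseteq> S subgroups of an ambient abelian group) is m-bounded.\<close>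
definition sq_bounded_by :: "nat \<Rightarrow> 'a::ab_group_add set \<Rightarrow> 'a set \<Rightarrow> bool" where
  "sq_bounded_by m S T \<longleftrightarrow> (\<forall>s\<in>S. natmult m s \<in> T)"

definition sq_bounded :: "'a::ab_group_add set \<Rightarrow> 'a set \<Rightarrow> bool" where
  "sq_bounded S T \<longleftrightarrow> (\<exists>m>0. sq_bounded_by m S T)"

text \<open>S/T is uniquely divisible: multiplication by every n > 0 is bijective on S/T.\<close>
definition sq_uniquely_divisible :: "'a::ab_group_add set \<Rightarrow> 'a set \<Rightarrow> bool" where
  "sq_uniquely_divisible S T \<longleftrightarrow>
     (\<forall>n>0. (\<forall>s\<in>S. \<exists>s'\<in>S. natmult n s' - s \<in> T) \<and>
            (\<forall>s'\<in>S. natmult n s' \<in> T \<longrightarrow> s' \<in> T))"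

definition sq_almost_uniquely_divisible :: "'a::ab_group_add set \<Rightarrow> 'a set \<Rightarrow> bool" where
  "sq_almost_uniquely_divisible S T \<longleftrightarrow>
     (\<exists>U B. is_subgroup U \<and> is_subgroup B \<and> T \<subseteq> U \<and> U \<subseteq> S \<and> T \<subseteq> B \<and> B \<subseteq> S \<and>
            U \<inter> B = T \<and> S = {u + b | u b. u \<in> U \<and> b \<in> B} \<and>
            sq_uniquely_divisible U T \<and> sq_bounded B T)"

text \<open>Kernel and cokernel of \<rho>, as subquotients of the ambient function groups.\<close>

definition smashL ::
  "('m \<Rightarrow> 'd) \<Rightarrow> ('m \<Rightarrow> 'd) \<Rightarrow> ('d \<Rightarrow> 'x set) \<Rightarrow> ('d \<Rightarrow> 'x) \<Rightarrow> ('m \<Rightarrow> 'x \<Rightarrow> 'x)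
   \<Rightarrow> (('d \<Rightarrow> 'x) \<Rightarrow> 'a::zero) set" where
  "smashL dm cd Xob pt Xmor = smash (limX dm cd Xob Xmor) pt"

definition ker_rho where
  "ker_rho dm cd Xob pt Xmor = {w \<in> smashL dm cd Xob pt Xmor. rho pt w = 0}"

definition im_rho where
  "im_rho dm cd Xob pt Xmor = rho pt ` smashL dm cd Xob pt Xmor"

end

(* The map \<rho> commutes with composition by additive endomorphisms h of A, acting pointwise on
   A-valued functions.  Hence ker \<rho> \<subseteq> (lim X) \<and> A and im \<rho> \<subseteq> lim (X \<and> A) are subgroups
   stable under all these h, and it suffices to study a quotient S/T of such stable subgroups.
   If m A = 0, multiplication by m acts on S as the zero endomorphism.  If A is uniquely
   divisible, the additive inverse of multiplication by n acts on S and T and divides by n in S/T.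
   If A = U \<oplus> B with U uniquely divisible and B bounded, the projection p onto U splits S/T as
   {s. (1 - p) s \<in> T}/T \<oplus> {s. p s \<in> T}/T; in the first summand division by n is induced by an
   additive map \<delta> on A with n \<delta> = p, and the second summand is killed by the exponent of B. *)

theory Submission
  imports Defs HOL.Modules
begin

lemma natmult_add: "natmult n (a + b) = natmult n a + natmult n (b::'a::ab_group_add)"
  by (induction n) (simp_all add: algebra_simps)

lemma additive_natmult: "additive (natmult n :: 'a::ab_group_add \<Rightarrow> 'a)"
  by unfold_locales (rule natmult_add)

lemma additive_natmult_commute: "additive h \<Longrightarrow> h (natmult n a) = natmult n (h a)"
  by (induction n) (simp_all add: additive.add additive.zero)

lemma is_subgroup_diff: "is_subgroup S \<Longrightarrow> a \<in> S \<Longrightarrow> b \<in> S \<Longrightarrow> a - b \<in> S"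
  unfolding is_subgroup_def diff_conv_add_uminus by blast

lemma uniquely_divisible_natmult_root:
  "sq_uniquely_divisible U {0} \<Longrightarrow> n > 0 \<Longrightarrow> a \<in> U \<Longrightarrow> \<exists>u\<in>U. natmult n u = a"
  unfolding sq_uniquely_divisible_def by auto

lemma uniquely_divisible_natmult_cancel:
  assumes "is_subgroup U" "sq_uniquely_divisible U {0}" "n > 0" "u \<in> U" "v \<in> U"
    and "natmult n u = natmult n v"
  shows "u = v"
proof -
  have "u - v \<in> U" using assms(1,4,5) by (rule is_subgroup_diff)
  moreover have "natmult n (u - v) \<in> {0}"
    using assms(6) by (simp add: additive.diff[OF additive_natmult])
  ultimately have "u - v \<in> {0}" using assms(2,3) unfolding sq_uniquely_divisible_def by blast
  then show ?thesis by simp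
qed

lemma uniquely_divisible_additive_divide:
  assumes U: "is_subgroup U" "sq_uniquely_divisible U {0}" and n: "n > 0"
    and p: "additive p" "\<And>a. p a \<in> U"
  obtains \<delta> where "additive \<delta>" "\<And>a. \<delta> a \<in> U" "\<And>a. natmult n (\<delta> a) = p a"
    "\<And>a. \<delta> (natmult n a) = p a"
proof -
  have "\<forall>a. \<exists>u. u \<in> U \<and> natmult n u = p a"
    using uniquely_divisible_natmult_root[OF U(2) n p(2)] by blast
  then obtain \<delta> where \<delta>: "\<And>a. \<delta> a \<in> U" "\<And>a. natmult n (\<delta> a) = p a"
    by (metis choice)
  have "\<delta> (a + b) = \<delta> a + \<delta> b" for a b
  proof (rule uniquely_divisible_natmult_cancel[OF U n \<delta>(1)])
    show "\<delta> a + \<delta> b \<in> U" using U(1) \<delta>(1) unfolding is_subgroup_def by blast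
    show "natmult n (\<delta> (a + b)) = natmult n (\<delta> a + \<delta> b)"
      by (simp add: \<delta>(2) natmult_add additive.add[OF p(1)])
  qed
  then have "additive \<delta>" by unfold_locales
  moreover have "\<delta> (natmult n a) = p a" for a
  proof (rule uniquely_divisible_natmult_cancel[OF U n \<delta>(1) p(2)])
    show "natmult n (\<delta> (natmult n a)) = natmult n (p a)"
      by (simp add: \<delta>(2) additive_natmult_commute[OF p(1)])
  qed
  ultimately show ?thesis using \<delta> that by blast
qed

lemma direct_sum_projection:
  fixes U B :: "'a::ab_group_add set"
  assumes U: "is_subgroup U" and B: "is_subgroup B" and UB: "U \<inter> B = {0}"
    and sum: "UNIV = {u + b | u b. u \<in> U \<and> b \<in> B}"
  obtains p where "additive p" "\<And>a. p a \<in> U" "\<And>a. a - p a \<in> B" "\<And>u. u \<in> U \<Longrightarrow> p u = u"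
proof -
  have unique: "u = v" if "u \<in> U" "v \<in> U" "a - u \<in> B" "a - v \<in> B" for a u v
  proof -
    have "u - v \<in> U" using U that by (simp add: is_subgroup_diff)
    moreover have "u - v = (a - v) - (a - u)" by simp
    then have "u - v \<in> B" using B that is_subgroup_diff by metis
    ultimately have "u - v = 0" using UB by blast
    then show ?thesis by simp
  qed
  have "\<exists>u. u \<in> U \<and> a - u \<in> B" for a
  proof -
    have "a \<in> {u + b | u b. u \<in> U \<and> b \<in> B}" unfolding sum[symmetric] by simp
    then obtain u b where "a = u + b" "u \<in> U" "b \<in> B" by blast
    then show ?thesis by auto
  qed
  then obtain p where p: "\<And>a. p a \<in> U" "\<And>a. a - p a \<in> B"
    by (metis choice)
  have "p (a + b) = p a + p b" for a b
  proof (rule unique[OF p(1) _ p(2)])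
    show "p a + p b \<in> U" using U p(1) unfolding is_subgroup_def by blast
    have eq: "a + b - (p a + p b) = (a - p a) + (b - p b)" by (simp add: algebra_simps)
    show "a + b - (p a + p b) \<in> B" unfolding eq using B p(2) unfolding is_subgroup_def by blast
  qed
  then have "additive p" by unfold_locales
  moreover have "p u = u" if "u \<in> U" for u
    using unique[OF p(1) that p(2)] B unfolding is_subgroup_def by simp
  ultimately show ?thesis using p that by blast
qed

definition stable_subgroup :: "(('a::ab_group_add \<Rightarrow> 'a) \<Rightarrow> 'g \<Rightarrow> 'g) \<Rightarrow> 'g::ab_group_add set \<Rightarrow> bool" where
  "stable_subgroup act S \<longleftrightarrow> is_subgroup S \<and> (\<forall>h. additive h \<longrightarrow> (\<forall>s\<in>S. act h s \<in> S))"

lemma stable_subgroup_zero_mem: "stable_subgroup act S \<Longrightarrow> 0 \<in> S"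
  by (simp add: stable_subgroup_def is_subgroup_def)

locale endo_action =
  fixes act :: "('a::ab_group_add \<Rightarrow> 'a) \<Rightarrow> 'g::ab_group_add \<Rightarrow> 'g"
  assumes act_add: "additive h \<Longrightarrow> act h (x + y) = act h x + act h y"
    and act_plus: "act (\<lambda>a. h a + k a) x = act h x + act k x"
    and act_comp: "act (\<lambda>a. h (k a)) x = act h (act k x)"
    and act_ident: "act (\<lambda>a. a) x = x"
begin

lemma act_zero_fun: "act (\<lambda>a. 0) x = 0"
  using act_plus[of "\<lambda>a. 0" "\<lambda>a. 0" x] by simp

lemma act_zero: "additive h \<Longrightarrow> act h 0 = 0"
  using act_add[of h 0 0] by simp

lemma act_minus: "act uminus x = - x"
  using act_plus[of "\<lambda>a. a" uminus x] by (simp add: act_zero_fun act_ident add_eq_0_iff)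

lemma act_natmult: "act (natmult n) x = natmult n x"
proof (induction n)
  case 0
  have "natmult 0 = (\<lambda>a::'a. 0)" by (rule ext) simp
  then show ?case by (simp add: act_zero_fun)
next
  case (Suc n)
  have "natmult (Suc n) = (\<lambda>a::'a. a + natmult n a)" by (rule ext) simp
  then show ?case by (simp add: act_plus act_ident Suc.IH)
qed

lemma act_complement: "act h x + act (\<lambda>a. a - h a) x = x"
  using act_plus[of h "\<lambda>a. a - h a" x] by (simp add: act_ident)

lemma stable_subgroupI:
  assumes "0 \<in> S" and "\<And>s t. s \<in> S \<Longrightarrow> t \<in> S \<Longrightarrow> s + t \<in> S"
    and "\<And>h s. additive h \<Longrightarrow> s \<in> S \<Longrightarrow> act h s \<in> S"
  shows "stable_subgroup act S"
proof -
  have "additive (uminus :: 'a \<Rightarrow> 'a)" by unfold_locales simp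
  then have "- s \<in> S" if "s \<in> S" for s using assms(3)[OF _ that] by (metis act_minus)
  then show ?thesis using assms unfolding stable_subgroup_def is_subgroup_def by blast
qed

lemma stable_subgroup_natmult: "stable_subgroup act S \<Longrightarrow> s \<in> S \<Longrightarrow> natmult n s \<in> S"
  using additive_natmult unfolding stable_subgroup_def by (metis act_natmult)

lemma stable_subgroup_trivial: "stable_subgroup act {0}"
  by (rule stable_subgroupI) (simp_all add: act_zero)

lemma is_subgroup_act_preimage:
  assumes S: "is_subgroup S" and T: "is_subgroup T" and h: "additive h"
  shows "is_subgroup {s \<in> S. act h s \<in> T}"
  unfolding is_subgroup_def
proof (intro conjI ballI)
  show "0 \<in> {s \<in> S. act h s \<in> T}" using S T by (simp add: is_subgroup_def act_zero[OF h])
next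
  fix s t assume "s \<in> {s \<in> S. act h s \<in> T}" "t \<in> {s \<in> S. act h s \<in> T}"
  then show "s + t \<in> {s \<in> S. act h s \<in> T}"
    using S T by (simp add: is_subgroup_def act_add[OF h])
next
  fix s assume s: "s \<in> {s \<in> S. act h s \<in> T}"
  have "act h (- s) = - act h s"
    using act_add[OF h, of "- s" s] act_zero[OF h] by (simp add: add_eq_0_iff2)
  moreover have "- s \<in> S" "- act h s \<in> T" using S T s unfolding is_subgroup_def by auto
  ultimately show "- s \<in> {s \<in> S. act h s \<in> T}" by simp
qed

lemma stable_quotient_bounded_by:
  assumes T: "stable_subgroup act T" and m: "\<And>a::'a. natmult m a = 0"
  shows "sq_bounded_by m S T"
proof -
  have "natmult m = (\<lambda>a::'a. 0)" by (intro ext m)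
  then have "natmult m s = 0" for s :: 'g using act_natmult[of m s] by (simp add: act_zero_fun)
  moreover have "0 \<in> T" using T by (rule stable_subgroup_zero_mem)
  ultimately show ?thesis unfolding sq_bounded_by_def by simp
qed

lemma stable_quotient_uniquely_divisible_part:
  assumes S: "stable_subgroup act S" and T: "stable_subgroup act T"
    and U: "is_subgroup U" "sq_uniquely_divisible U {0}"
    and p: "additive p" "\<And>a. p a \<in> U" "\<And>u. u \<in> U \<Longrightarrow> p u = u"
  shows "sq_uniquely_divisible {s \<in> S. act (\<lambda>a. a - p a) s \<in> T} T"
  unfolding sq_uniquely_divisible_def
proof (intro allI impI)
  fix n :: nat assume n: "n > 0"
  obtain \<delta> where \<delta>: "additive \<delta>" "\<And>a. \<delta> a \<in> U" "\<And>a. natmult n (\<delta> a) = p a"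
    "\<And>a. \<delta> (natmult n a) = p a"
    using uniquely_divisible_additive_divide[OF U n p(1,2)] by blast
  have T_group: "0 \<in> T" "\<And>s t. s \<in> T \<Longrightarrow> t \<in> T \<Longrightarrow> s + t \<in> T" "\<And>s. s \<in> T \<Longrightarrow> - s \<in> T"
    "\<And>h s. additive h \<Longrightarrow> s \<in> T \<Longrightarrow> act h s \<in> T"
    using T unfolding stable_subgroup_def is_subgroup_def by auto
  let ?SU = "{s \<in> S. act (\<lambda>a. a - p a) s \<in> T}"
  show "(\<forall>s\<in>?SU. \<exists>s'\<in>?SU. natmult n s' - s \<in> T) \<and> (\<forall>s\<in>?SU. natmult n s \<in> T \<longrightarrow> s \<in> T)"
  proof (intro conjI ballI impI)
    fix s assume s: "s \<in> ?SU"
    have "act (\<lambda>a. a - p a) (act \<delta> s) = act (\<lambda>a. \<delta> a - p (\<delta> a)) s" by (simp flip: act_comp)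
    also have "\<dots> = 0" using p(3)[OF \<delta>(2)] by (simp add: act_zero_fun)
    finally have "act \<delta> s \<in> ?SU"
      using S \<delta>(1) s T_group(1) unfolding stable_subgroup_def by simp
    moreover have "natmult n (act \<delta> s) = act p s"
      using \<delta>(3) by (simp add: act_natmult[symmetric] act_comp[symmetric])
    then have "natmult n (act \<delta> s) - s = act p s - (act p s + act (\<lambda>a. a - p a) s)"
      by (simp only: act_complement)
    then have "natmult n (act \<delta> s) - s = - act (\<lambda>a. a - p a) s" by simp
    ultimately show "\<exists>s'\<in>?SU. natmult n s' - s \<in> T"
      using s T_group(3) by auto
  next
    fix s assume s: "s \<in> ?SU" and ns: "natmult n s \<in> T"
    have "act \<delta> (natmult n s) = act p s"
      using \<delta>(4) by (simp add: act_natmult[symmetric] act_comp[symmetric])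
    then have "act p s \<in> T" using T_group(4)[OF \<delta>(1) ns] by simp
    then have "act p s + act (\<lambda>a. a - p a) s \<in> T" using s T_group(2) by blast
    then show "s \<in> T" by (simp only: act_complement)
  qed
qed

lemma stable_quotient_uniquely_divisible:
  assumes S: "stable_subgroup act S" and T: "stable_subgroup act T"
    and A: "sq_uniquely_divisible (UNIV :: 'a set) {0}"
  shows "sq_uniquely_divisible S T"
proof -
  have "is_subgroup (UNIV :: 'a set)" by (simp add: is_subgroup_def)
  moreover have "additive (\<lambda>a::'a. a)" by unfold_locales simp
  moreover have "{s \<in> S. act (\<lambda>a::'a. a - a) s \<in> T} = S"
    using stable_subgroup_zero_mem[OF T] by (simp add: act_zero_fun)
  ultimately show ?thesis
    using stable_quotient_uniquely_divisible_part[OF S T _ A, of "\<lambda>a. a"] by simp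
qed

lemma stable_quotient_bounded_part:
  assumes T: "stable_subgroup act T" and B: "sq_bounded B {0}" and p: "\<And>a. a - p a \<in> B"
  shows "sq_bounded {s \<in> S. act p s \<in> T} T"
proof -
  obtain m where m: "m > 0" "\<And>b. b \<in> B \<Longrightarrow> natmult m b = 0"
    using B unfolding sq_bounded_def sq_bounded_by_def by auto
  have "natmult m s \<in> T" if s: "act p s \<in> T" for s
  proof -
    have "natmult m = (\<lambda>a. natmult m (p a) + natmult m (a - p a))"
      by (simp add: fun_eq_iff natmult_add[symmetric])
    then have "natmult m s = act (\<lambda>a. natmult m (p a)) s + act (\<lambda>a. natmult m (a - p a)) s"
      by (metis act_natmult act_plus)
    also have "\<dots> = natmult m (act p s)"
      using m(2)[OF p] by (simp add: act_comp act_natmult act_zero_fun)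
    finally show ?thesis using stable_subgroup_natmult[OF T s] by simp
  qed
  then show ?thesis using m(1) unfolding sq_bounded_def sq_bounded_by_def by blast
qed

lemma stable_quotient_almost_uniquely_divisible:
  assumes S: "stable_subgroup act S" and T: "stable_subgroup act T" and TS: "T \<subseteq> S"
    and A: "sq_almost_uniquely_divisible (UNIV :: 'a set) {0}"
  shows "sq_almost_uniquely_divisible S T"
proof -
  obtain U B :: "'a set" where U: "is_subgroup U" "sq_uniquely_divisible U {0}"
    and B: "is_subgroup B" "sq_bounded B {0}"
    and UB: "U \<inter> B = {0}" "UNIV = {u + b | u b. u \<in> U \<and> b \<in> B}"
    using A unfolding sq_almost_uniquely_divisible_def by (elim exE conjE) (rule that; assumption)
  obtain p where p: "additive p" "\<And>a. p a \<in> U" "\<And>a. a - p a \<in> B" "\<And>u. u \<in> U \<Longrightarrow> p u = u"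
    using direct_sum_projection[OF U(1) B(1) UB] by blast
  let ?q = "\<lambda>a. a - p a"
  have q: "additive ?q" using p(1) by unfold_locales (simp add: additive.add)
  define SU where "SU = {s \<in> S. act ?q s \<in> T}"
  define SB where "SB = {s \<in> S. act p s \<in> T}"
  have groups: "is_subgroup S" "is_subgroup T"
    using S T by (simp_all add: stable_subgroup_def)
  have act_S: "act h s \<in> S" and act_T: "act h t \<in> T" if "additive h" "s \<in> S" "t \<in> T" for h s t
    using S T that unfolding stable_subgroup_def by blast+
  have T0: "0 \<in> T" using groups(2) by (simp add: is_subgroup_def)
  have SU_S: "SU \<subseteq> S" and SB_S: "SB \<subseteq> S" unfolding SU_def SB_def by auto
  have T_SU: "T \<subseteq> SU" and T_SB: "T \<subseteq> SB"
    using TS act_T[OF q] act_T[OF p(1)] T0 unfolding SU_def SB_def by blast+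
  have "SU \<inter> SB \<subseteq> T"
  proof
    fix s assume "s \<in> SU \<inter> SB"
    then have "act p s + act ?q s \<in> T"
      using groups(2) unfolding SU_def SB_def is_subgroup_def by blast
    then show "s \<in> T" by (simp only: act_complement)
  qed
  with T_SU T_SB have inter: "SU \<inter> SB = T" by blast
  have "S \<subseteq> {u + b | u b. u \<in> SU \<and> b \<in> SB}"
  proof
    fix s assume s: "s \<in> S"
    have "act ?q (act p s) = 0" using p(2,4) by (simp add: act_zero_fun flip: act_comp)
    then have "act p s \<in> SU" unfolding SU_def using act_S[OF p(1) s] T0 by simp
    moreover have "act p (act ?q s) = 0"
      using p(2,4) by (simp add: additive.diff[OF p(1)] act_zero_fun flip: act_comp)
    then have "act ?q s \<in> SB" unfolding SB_def using act_S[OF q s] T0 by simp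
    moreover have "s = act p s + act ?q s" by (simp add: act_complement)
    ultimately show "s \<in> {u + b | u b. u \<in> SU \<and> b \<in> SB}" by blast
  qed
  moreover have "{u + b | u b. u \<in> SU \<and> b \<in> SB} \<subseteq> S"
    using groups(1) SU_S SB_S unfolding is_subgroup_def by blast
  ultimately have decomp: "S = {u + b | u b. u \<in> SU \<and> b \<in> SB}" by (rule equalityI)
  have "is_subgroup SU" "is_subgroup SB"
    unfolding SU_def SB_def by (fact is_subgroup_act_preimage[OF groups q] is_subgroup_act_preimage[OF groups p(1)])+
  moreover have "sq_uniquely_divisible SU T"
    unfolding SU_def by (rule stable_quotient_uniquely_divisible_part[OF S T U p(1,2,4)])
  moreover have "sq_bounded SB T"
    unfolding SB_def by (rule stable_quotient_bounded_part[OF T B(2) p(3)])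
  ultimately show ?thesis
    unfolding sq_almost_uniquely_divisible_def using T_SU T_SB SU_S SB_S inter decomp
    by (intro exI[of _ SU] exI[of _ SB] conjI) assumption+
qed

end

lemma stable_subgroup_image:
  fixes act :: "('a::ab_group_add \<Rightarrow> 'a) \<Rightarrow> 'g::ab_group_add \<Rightarrow> 'g"
    and act' :: "('a \<Rightarrow> 'a) \<Rightarrow> 'h::ab_group_add \<Rightarrow> 'h" and \<phi> :: "'g \<Rightarrow> 'h"
  assumes act': "endo_action act'" and S: "stable_subgroup act S"
    and add: "\<And>s t. s \<in> S \<Longrightarrow> t \<in> S \<Longrightarrow> \<phi> (s + t) = \<phi> s + \<phi> t"
    and equiv: "\<And>h s. additive h \<Longrightarrow> s \<in> S \<Longrightarrow> \<phi> (act h s) = act' h (\<phi> s)"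
  shows "stable_subgroup act' (\<phi> ` S)"
proof (rule endo_action.stable_subgroupI[OF act'])
  have "0 \<in> S" using S by (rule stable_subgroup_zero_mem)
  moreover from this have "\<phi> 0 = 0" using add[of 0 0] by simp
  ultimately show "0 \<in> \<phi> ` S" by (metis image_eqI)
next
  fix s t assume "s \<in> \<phi> ` S" "t \<in> \<phi> ` S"
  then show "s + t \<in> \<phi> ` S"
    using S add unfolding stable_subgroup_def is_subgroup_def by (auto simp flip: add)
next
  fix h :: "'a \<Rightarrow> 'a" and s assume "additive h" "s \<in> \<phi> ` S"
  then show "act' h s \<in> \<phi> ` S"
    using S equiv unfolding stable_subgroup_def by (auto simp flip: equiv)
qed

lemma stable_subgroup_kernel:
  fixes act :: "('a::ab_group_add \<Rightarrow> 'a) \<Rightarrow> 'g::ab_group_add \<Rightarrow> 'g"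
    and act' :: "('a \<Rightarrow> 'a) \<Rightarrow> 'h::ab_group_add \<Rightarrow> 'h" and \<phi> :: "'g \<Rightarrow> 'h"
  assumes act: "endo_action act" and act': "endo_action act'" and S: "stable_subgroup act S"
    and add: "\<And>s t. s \<in> S \<Longrightarrow> t \<in> S \<Longrightarrow> \<phi> (s + t) = \<phi> s + \<phi> t"
    and equiv: "\<And>h s. additive h \<Longrightarrow> s \<in> S \<Longrightarrow> \<phi> (act h s) = act' h (\<phi> s)"
  shows "stable_subgroup act {s \<in> S. \<phi> s = 0}"
proof (rule endo_action.stable_subgroupI[OF act])
  have "0 \<in> S" using S by (rule stable_subgroup_zero_mem)
  moreover from this have "\<phi> 0 = 0" using add[of 0 0] by simp
  ultimately show "0 \<in> {s \<in> S. \<phi> s = 0}" by simp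
next
  fix s t assume "s \<in> {s \<in> S. \<phi> s = 0}" "t \<in> {s \<in> S. \<phi> s = 0}"
  then show "s + t \<in> {s \<in> S. \<phi> s = 0}"
    using S add unfolding stable_subgroup_def is_subgroup_def by simp
next
  fix h :: "'a \<Rightarrow> 'a" and s assume "additive h" "s \<in> {s \<in> S. \<phi> s = 0}"
  then show "act h s \<in> {s \<in> S. \<phi> s = 0}"
    using S equiv endo_action.act_zero[OF act'] unfolding stable_subgroup_def by simp
qed

interpretation comp_action: endo_action "(\<circ>) :: ('a::ab_group_add \<Rightarrow> 'a) \<Rightarrow> ('i \<Rightarrow> 'a) \<Rightarrow> 'i \<Rightarrow> 'a"
  by unfold_locales (simp_all add: fun_eq_iff additive.add)

interpretation pointwise_comp_action:
  endo_action "\<lambda>h (z :: 'i \<Rightarrow> 'j \<Rightarrow> 'a::ab_group_add) i. h \<circ> z i"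
  by unfold_locales (simp_all add: fun_eq_iff additive.add)

lemma smash_finite_support: "y \<in> smash Y p \<Longrightarrow> finite {s. y s \<noteq> 0}"
  by (simp add: smash_def)

lemma smash_add:
  fixes y y' :: "'x \<Rightarrow> 'a::comm_monoid_add"
  assumes y: "y \<in> smash Y p" "y' \<in> smash Y p"
  shows "y + y' \<in> smash Y p"
proof -
  have "{s. (y + y') s \<noteq> 0} \<subseteq> {s. y s \<noteq> 0} \<union> {s. y' s \<noteq> 0}" by auto
  then show "y + y' \<in> smash Y p" using y unfolding smash_def by (auto intro: finite_subset)
qed

lemma smash_comp_additive: "additive h \<Longrightarrow> y \<in> smash Y p \<Longrightarrow> h \<circ> y \<in> smash Y p"
proof -
  assume h: "additive h" and y: "y \<in> smash Y p"
  have "{s. h (y s) \<noteq> 0} \<subseteq> {s. y s \<noteq> 0}" using additive.zero[OF h] by auto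
  then show "h \<circ> y \<in> smash Y p"
    using y additive.zero[OF h] unfolding smash_def by (auto intro: finite_subset)
qed

lemma smash_stable: "stable_subgroup (\<circ>) (smash Y p :: ('x \<Rightarrow> 'a::ab_group_add) set)"
proof (rule comp_action.stable_subgroupI)
  show "0 \<in> smash Y p" by (simp add: smash_def)
qed (simp_all add: smash_add smash_comp_additive)

lemma push_eq_sum:
  assumes "finite F" "{s. y s \<noteq> 0} \<subseteq> F"
  shows "push f q y t = (if t = q then 0 else sum y {s \<in> F. f s = t})"
  unfolding push_def using assms by (auto intro!: sum.mono_neutral_left)

lemma push_support: "push f q y t \<noteq> 0 \<Longrightarrow> t \<noteq> q \<and> t \<in> f ` {s. y s \<noteq> 0}"
  unfolding push_def by (auto split: if_splits elim: sum.not_neutral_contains_not_neutral)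

lemma finite_support_push: "finite {s. y s \<noteq> 0} \<Longrightarrow> finite {t. push f q y t \<noteq> 0}"
  by (rule finite_subset[OF _ finite_imageI]) (auto dest: push_support)

lemma push_add:
  assumes "finite {s. y s \<noteq> 0}" "finite {s. y' s \<noteq> 0}"
  shows "push f q (y + y') = push f q y + push f q y'"
proof
  fix t
  let ?F = "{s. y s \<noteq> 0} \<union> {s. y' s \<noteq> 0}"
  have "finite ?F" using assms by simp
  moreover have "{s. (y + y') s \<noteq> 0} \<subseteq> ?F" by auto
  ultimately show "push f q (y + y') t = (push f q y + push f q y') t"
    by (simp add: push_eq_sum[of ?F] sum.distrib)
qed

lemma push_comp_additive:
  assumes h: "additive h" and y: "finite {s. y s \<noteq> 0}"
  shows "push f q (h \<circ> y) = h \<circ> push f q y"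
proof
  fix t
  have "{s. (h \<circ> y) s \<noteq> 0} \<subseteq> {s. y s \<noteq> 0}" using additive.zero[OF h] by auto
  then show "push f q (h \<circ> y) t = (h \<circ> push f q y) t"
    using y by (simp add: push_eq_sum[OF y] additive.sum[OF h] additive.zero[OF h])
qed

lemma push_cong: "(\<And>s. y s \<noteq> 0 \<Longrightarrow> f s = g s) \<Longrightarrow> push f q y = push g q y"
  unfolding push_def by (intro ext) (auto intro!: sum.cong)

lemma push_push:
  assumes y: "finite {s. y s \<noteq> 0}" and r: "g q = r"
  shows "push g r (push f q y) = push (g \<circ> f) r y"
proof
  fix t
  let ?F = "{s. y s \<noteq> 0}"
  show "push g r (push f q y) t = push (g \<circ> f) r y t"
  proof (cases "t = r")
    case True
    then show ?thesis by (simp add: push_def)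
  next
    case False
    have "{u. push f q y u \<noteq> 0} \<subseteq> f ` ?F" by (auto dest: push_support)
    then have "push g r (push f q y) t = (\<Sum>u \<in> {u \<in> f ` ?F. g u = t}. push f q y u)"
      using y False by (simp add: push_eq_sum[of "f ` ?F"])
    also have "\<dots> = (\<Sum>u \<in> {u \<in> f ` ?F. g u = t}. sum y {s \<in> {s \<in> ?F. g (f s) = t}. f s = u})"
    proof (rule sum.cong)
      fix u assume u: "u \<in> {u \<in> f ` ?F. g u = t}"
      then have "u \<noteq> q" using r False by auto
      with u show "push f q y u = sum y {s \<in> {s \<in> ?F. g (f s) = t}. f s = u}"
        by (simp add: push_eq_sum[OF y order_refl]) (intro sum.cong, auto)
    qed simp
    also have "\<dots> = sum y {s \<in> ?F. g (f s) = t}"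
      by (rule sum.group) (use y in auto)
    also have "\<dots> = push (g \<circ> f) r y t"
      using False by (simp add: push_eq_sum[OF y order_refl])
    finally show ?thesis .
  qed
qed

lemma rho_add:
  "w \<in> smashL dm cd Xob pt Xmor \<Longrightarrow> w' \<in> smashL dm cd Xob pt Xmor \<Longrightarrow>
    rho pt (w + w') = rho pt w + rho pt w'"
  by (rule ext) (simp add: smashL_def rho_def push_add smash_finite_support)

lemma rho_comp_additive:
  "additive h \<Longrightarrow> w \<in> smashL dm cd Xob pt Xmor \<Longrightarrow> rho pt (h \<circ> w) = (\<lambda>d. h \<circ> rho pt w d)"
  by (simp add: smashL_def rho_def push_comp_additive smash_finite_support)

lemma ker_rho_stable:
  "stable_subgroup (\<circ>) (ker_rho dm cd Xob pt Xmor :: (('d \<Rightarrow> 'x) \<Rightarrow> 'a::ab_group_add) set)"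
  unfolding ker_rho_def
proof (rule stable_subgroup_kernel[where \<phi> = "rho pt"])
  show "endo_action (\<lambda>h (z :: 'd \<Rightarrow> 'x \<Rightarrow> 'a) d. h \<circ> z d)"
    by (rule pointwise_comp_action.endo_action_axioms)
qed (simp_all add: comp_action.endo_action_axioms smashL_def smash_stable rho_add rho_comp_additive)

lemma im_rho_stable:
  "stable_subgroup (\<lambda>h z d. h \<circ> z d) (im_rho dm cd Xob pt Xmor :: ('d \<Rightarrow> 'x \<Rightarrow> 'a::ab_group_add) set)"
  unfolding im_rho_def
  by (rule stable_subgroup_image[where act = "(\<circ>)" and \<phi> = "rho pt"])
    (simp_all add: pointwise_comp_action.endo_action_axioms smashL_def smash_stable rho_add
      rho_comp_additive)

lemma rho_in_smash:
  assumes w: "w \<in> smash (limX dm cd Xob Xmor) pt"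
  shows "rho pt w d \<in> smash (Xob d) (pt d)"
proof -
  have "x \<noteq> pt d \<and> x \<in> Xob d" if "rho pt w d x \<noteq> 0" for x
    using push_support[OF that[unfolded rho_def]] w by (auto simp: smash_def limX_def)
  moreover have "finite {x. rho pt w d x \<noteq> 0}"
    using finite_support_push[OF smash_finite_support[OF w]] by (simp add: rho_def)
  ultimately show ?thesis unfolding smash_def by auto
qed

lemma rho_compatible:
  assumes pointed: "\<And>f. Xmor f (pt (dm f)) = pt (cd f)"
    and w: "w \<in> smash (limX dm cd Xob Xmor) pt"
  shows "push (Xmor f) (pt (cd f)) (rho pt w (dm f)) = rho pt w (cd f)"
proof -
  have "push (Xmor f) (pt (cd f)) (rho pt w (dm f)) = push (Xmor f \<circ> (\<lambda>s. s (dm f))) (pt (cd f)) w"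
    unfolding rho_def
    by (rule push_push[where g = "Xmor f" and q = "pt (dm f)", OF smash_finite_support[OF w] pointed])
  also have "\<dots> = push (\<lambda>s. s (cd f)) (pt (cd f)) w"
    by (rule push_cong) (use w in \<open>auto simp: smash_def limX_def\<close>)
  finally show ?thesis by (simp add: rho_def)
qed

lemma limXA_stable:
  "stable_subgroup (\<lambda>h z d. h \<circ> z d) (limXA dm cd Xob pt Xmor :: ('d \<Rightarrow> 'x \<Rightarrow> 'a::ab_group_add) set)"
proof (rule pointwise_comp_action.stable_subgroupI)
  show "0 \<in> limXA dm cd Xob pt Xmor" by (simp add: limXA_def smash_def push_def fun_eq_iff)
next
  fix z z' :: "'d \<Rightarrow> 'x \<Rightarrow> 'a"
  assume z: "z \<in> limXA dm cd Xob pt Xmor" and z': "z' \<in> limXA dm cd Xob pt Xmor"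
  have "finite {x. z d x \<noteq> 0}" "finite {x. z' d x \<noteq> 0}" for d
    using z z' by (simp_all add: limXA_def smash_def)
  then have "push (Xmor f) (pt (cd f)) (z (dm f) + z' (dm f)) = z (cd f) + z' (cd f)" for f
    using z z' by (simp add: limXA_def push_add)
  then show "z + z' \<in> limXA dm cd Xob pt Xmor"
    using z z' by (simp add: limXA_def smash_add)
next
  fix h :: "'a \<Rightarrow> 'a" and z :: "'d \<Rightarrow> 'x \<Rightarrow> 'a"
  assume h: "additive h" and z: "z \<in> limXA dm cd Xob pt Xmor"
  have "finite {x. z d x \<noteq> 0}" for d using z by (simp add: limXA_def smash_def)
  then have "push (Xmor f) (pt (cd f)) (h \<circ> z (dm f)) = h \<circ> z (cd f)" for f
    using z by (simp add: limXA_def push_comp_additive[OF h])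
  then show "(\<lambda>d. h \<circ> z d) \<in> limXA dm cd Xob pt Xmor"
    using z by (simp add: limXA_def smash_comp_additive[OF h])
qed

lemma im_rho_subset_limXA:
  assumes pointed: "\<And>f. Xmor f (pt (dm f)) = pt (cd f)"
  shows "im_rho dm cd Xob pt Xmor \<subseteq> limXA dm cd Xob pt Xmor"
proof
  fix z assume "z \<in> im_rho dm cd Xob pt Xmor"
  then obtain w where w: "w \<in> smash (limX dm cd Xob Xmor) pt" and z: "z = rho pt w"
    by (auto simp: im_rho_def smashL_def)
  show "z \<in> limXA dm cd Xob pt Xmor"
    using rho_in_smash[OF w] rho_compatible[where dm = dm and cd = cd, OF pointed w]
    unfolding limXA_def z by simp
qed

theorem mainTheorem6:
  fixes dm cd :: "'m \<Rightarrow> 'd" and idm :: "'d \<Rightarrow> 'm" and cmp :: "'m \<Rightarrow> 'm \<Rightarrow> 'm"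
    and Xob :: "'d \<Rightarrow> 'x set" and pt :: "'d \<Rightarrow> 'x" and Xmor :: "'m \<Rightarrow> 'x \<Rightarrow> 'x"
  assumes cat: "is_category dm cd idm cmp"
    and diag: "is_pointed_diagram dm cd idm cmp Xob pt Xmor"
  shows
    "(\<forall>m. (\<forall>a::'a::ab_group_add. natmult m a = 0) \<longrightarrow>
        sq_bounded_by m (ker_rho dm cd Xob pt Xmor :: (('d \<Rightarrow> 'x) \<Rightarrow> 'a) set) {0} \<and>
        sq_bounded_by m (limXA dm cd Xob pt Xmor :: ('d \<Rightarrow> 'x \<Rightarrow> 'a) set) (im_rho dm cd Xob pt Xmor))
     \<and>
     (sq_uniquely_divisible (UNIV :: 'a set) {0} \<longrightarrow>
        sq_uniquely_divisible (ker_rho dm cd Xob pt Xmor :: (('d \<Rightarrow> 'x) \<Rightarrow> 'a) set) {0} \<and>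
        sq_uniquely_divisible (limXA dm cd Xob pt Xmor :: ('d \<Rightarrow> 'x \<Rightarrow> 'a) set) (im_rho dm cd Xob pt Xmor))
     \<and>
     (sq_almost_uniquely_divisible (UNIV :: 'a set) {0} \<longrightarrow>
        sq_almost_uniquely_divisible (ker_rho dm cd Xob pt Xmor :: (('d \<Rightarrow> 'x) \<Rightarrow> 'a) set) {0} \<and>
        sq_almost_uniquely_divisible (limXA dm cd Xob pt Xmor :: ('d \<Rightarrow> 'x \<Rightarrow> 'a) set) (im_rho dm cd Xob pt Xmor))"
proof -
  have "\<And>f. Xmor f (pt (dm f)) = pt (cd f)"
    using diag by (simp add: is_pointed_diagram_def)
  then have IL: "im_rho dm cd Xob pt Xmor \<subseteq> (limXA dm cd Xob pt Xmor :: ('d \<Rightarrow> 'x \<Rightarrow> 'a) set)"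
    by (rule im_rho_subset_limXA)
  note K = ker_rho_stable and I = im_rho_stable
  show ?thesis
    by (intro conjI allI impI)
      (simp_all add: comp_action.stable_quotient_bounded_by[OF comp_action.stable_subgroup_trivial]
        pointwise_comp_action.stable_quotient_bounded_by[OF I]
        comp_action.stable_quotient_uniquely_divisible[OF K comp_action.stable_subgroup_trivial]
        pointwise_comp_action.stable_quotient_uniquely_divisible[OF limXA_stable I]
        comp_action.stable_quotient_almost_uniquely_divisible[OF K comp_action.stable_subgroup_trivial]
        stable_subgroup_zero_mem[OF K]
        pointwise_comp_action.stable_quotient_almost_uniquely_divisible[OF limXA_stable I IL])
qed

end
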